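(* In the setting of $N$ classical particles of equal mass $m$ and charge $q$ with Hamiltonian $H(\mathbf X,\mathbf P)=\frac1{2m}\sum_{i=1}^N|\mathbf p_i-q\boldsymbol A(\mathbf x_i)|^2$ for a smooth vector potential $\boldsymbol A:\mathbb R^3\to\mathbb R^3$, let $\mathcal M_m\in O(3)$ with $\mathcal M_m^2=I$ and let $\mathcal M$ act as $(\mathbf x_i,\mathbf p_i)\mapsto(\mathcal M_m\mathbf x_i,-\mathcal M_m\mathbf p_i)$ for every $i$ (block diagonal on $\mathbb R^{3N}$ with identical $3\times3$ blocks $\mathcal M_m$). Then $\mathcal M$ yields time reversal invariance if and only if there is a smooth $G:\mathbb R^3\to\mathbb R$ with $$\mathcal M_m\boldsymbol A(\mathcal M_m\mathbf x)=-\boldsymbol A(\mathbf x)-\nabla G(\mathbf x)\quad\text{for all }\mathbf x\in\mathbb R^3,$$ i.e. $\mathcal M_m\boldsymbol A(\mathcal M_m\,\cdot)\in[-\boldsymbol A]$.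
   Context: $\mathcal M$ yields time reversal invariance if there is a smooth $G:\mathbb R^3\to\mathbb R$ with $H(\mathcal M\Gamma)=\frac1{2m}\sum_i|\mathbf p_i-q(\boldsymbol A(\mathbf x_i)+\nabla G(\mathbf x_i))|^2$ for all $\Gamma=(\mathbf x_i,\mathbf p_i)_i$. $[\boldsymbol A]$ denotes the gauge class $\{\boldsymbol A+\nabla G\}$. *)

theory Defs
  imports "HOL-Analysis.Analysis"
begin

fun Ck :: "nat \<Rightarrow> ('a::euclidean_space \<Rightarrow> 'b::real_normed_vector) \<Rightarrow> bool" where
  "Ck 0 f = continuous_on UNIV f"
| "Ck (Suc k) f = (\<exists>f'. (\<forall>x. (f has_derivative f' x) (at x)) \<and> (\<forall>v. Ck k (\<lambda>x. f' x v)))"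

definition smooth :: "('a::euclidean_space \<Rightarrow> 'b::real_normed_vector) \<Rightarrow> bool" where
  "smooth f \<longleftrightarrow> (\<forall>k. Ck k f)"

definition grad :: "(real^3 \<Rightarrow> real) \<Rightarrow> real^3 \<Rightarrow> real^3" where
  "grad G x = (\<chi> i. frechet_derivative G (at x) (axis i 1))"

text \<open>Phase space point: positions x i and momenta p i, particles i < N.\<close>
definition hamiltonian ::
  "real \<Rightarrow> real \<Rightarrow> (real^3 \<Rightarrow> real^3) \<Rightarrow> nat \<Rightarrow> (nat \<Rightarrow> real^3) \<Rightarrow> (nat \<Rightarrow> real^3) \<Rightarrow> real" where
  "hamiltonian m q A N x p = (1 / (2 * m)) * (\<Sum>i<N. (norm (p i - q *\<^sub>R A (x i)))\<^sup>2)"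

definition Mact :: "real^3^3 \<Rightarrow> (nat \<Rightarrow> real^3) \<times> (nat \<Rightarrow> real^3) \<Rightarrow> (nat \<Rightarrow> real^3) \<times> (nat \<Rightarrow> real^3)" where
  "Mact Mm \<Gamma> = ((\<lambda>i. Mm *v fst \<Gamma> i), (\<lambda>i. - (Mm *v snd \<Gamma> i)))"

definition yields_TRI :: "real \<Rightarrow> real \<Rightarrow> (real^3 \<Rightarrow> real^3) \<Rightarrow> nat \<Rightarrow> real^3^3 \<Rightarrow> bool" where
  "yields_TRI m q A N Mm \<longleftrightarrow>
     (\<exists>G :: real^3 \<Rightarrow> real. smooth G \<and>
        (\<forall>x p. hamiltonian m q A N (fst (Mact Mm (x, p))) (snd (Mact Mm (x, p)))
               = (1 / (2 * m)) * (\<Sum>i<N. (norm (p i - q *\<^sub>R (A (x i) + grad G (x i))))\<^sup>2)))"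

end

theory Submission
  imports Defs
begin

text \<open>The Hamiltonian only depends on the potential through the kinetic momenta
  \<open>p\<^sub>i - q A(x\<^sub>i)\<close>. Since \<open>M\<^sub>m\<close> is orthogonal and involutive, composing the Hamiltonian
  with \<open>\<M>\<close> gives again a Hamiltonian of the same form, with potential
  \<open>-M\<^sub>m A(M\<^sub>m \<cdot>)\<close>. Two such Hamiltonians agree on all of phase space iff their potentials
  agree: put every particle at the same point \<open>y\<close> with the kinetic momentum of the
  first potential vanishing there, so that the second Hamiltonian becomes
  \<open>N q\<^sup>2 |A y - B y|\<^sup>2/2m\<close>.\<close>

lemma norm_orthogonal_matrix_vector:
  fixes Q :: "real^'n^'n"
  assumes "orthogonal_matrix Q"
  shows "norm (Q *v v) = norm v"
proof -
  have "orthogonal_transformation ((*v) Q)"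
    using assms by (simp add: orthogonal_transformation_matrix matrix_vector_mul_linear)
  then show ?thesis
    by (rule orthogonal_transformation_norm)
qed

lemma transpose_eq_self_if_orthogonal_involution:
  fixes Q :: "real^'n^'n"
  assumes "orthogonal_matrix Q" and "Q ** Q = mat 1"
  shows "transpose Q = Q"
proof -
  have "transpose Q = transpose Q ** (Q ** Q)"
    using assms(2) by simp
  also have "\<dots> = Q"
    using assms(1) by (simp add: matrix_mul_assoc orthogonal_matrix)
  finally show ?thesis .
qed

lemma hamiltonian_Mact:
  assumes "orthogonal_matrix Mm"
  shows "hamiltonian m q A N (fst (Mact Mm (x, p))) (snd (Mact Mm (x, p)))
       = hamiltonian m q (\<lambda>y. - (transpose Mm *v A (Mm *v y))) N x p"
proof -
  have kinetic: "- (Mm *v p i) - q *\<^sub>R A (Mm *v x i)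
      = - (Mm *v (p i - q *\<^sub>R (- (transpose Mm *v A (Mm *v x i)))))" for i
  proof -
    have "Mm *v (transpose Mm *v v) = v" for v
      using assms by (metis matrix_vector_mul_assoc matrix_vector_mul_lid orthogonal_matrix_def)
    then show ?thesis
      by (simp add: matrix_vector_right_distrib matrix_vector_mult_scaleR)
  qed
  show ?thesis
    unfolding hamiltonian_def Mact_def
    by (simp add: kinetic norm_orthogonal_matrix_vector[OF assms])
qed

lemma hamiltonian_eq_iff_potential_eq:
  fixes A B :: "real^3 \<Rightarrow> real^3"
  assumes "m \<noteq> 0" and "q \<noteq> 0" and "N \<ge> 1"
  shows "(\<forall>x p. hamiltonian m q A N x p = hamiltonian m q B N x p) \<longleftrightarrow> A = B"
proof
  assume same_hamiltonian: "\<forall>x p. hamiltonian m q A N x p = hamiltonian m q B N x p"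
  show "A = B"
  proof
    fix y
    have "hamiltonian m q B N (\<lambda>i. y) (\<lambda>i. q *\<^sub>R A y) = hamiltonian m q A N (\<lambda>i. y) (\<lambda>i. q *\<^sub>R A y)"
      using same_hamiltonian by simp
    then have "real N * (norm (q *\<^sub>R A y - q *\<^sub>R B y))\<^sup>2 = 0"
      using assms(1) by (simp add: hamiltonian_def)
    then have "q *\<^sub>R (A y - B y) = 0"
      using assms(3) by (simp add: scaleR_diff_right)
    then show "A y = B y"
      using assms(2) by simp
  qed
qed simp

theorem mainTheorem11:
  fixes m q :: real and N :: nat and A :: "real^3 \<Rightarrow> real^3" and Mm :: "real^3^3"
  assumes "m > 0" and "q \<noteq> 0" and "N \<ge> 1"
    and "smooth A"
    and "orthogonal_matrix Mm" and "Mm ** Mm = mat 1"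
  shows "yields_TRI m q A N Mm \<longleftrightarrow>
         (\<exists>G :: real^3 \<Rightarrow> real. smooth G \<and>
            (\<forall>x. Mm *v A (Mm *v x) = - A x - grad G x))"
proof -
  have transpose_Mm: "transpose Mm = Mm"
    using assms(5,6) by (rule transpose_eq_self_if_orthogonal_involution)
  have time_reversal_iff: "(\<forall>x p. hamiltonian m q A N (fst (Mact Mm (x, p))) (snd (Mact Mm (x, p)))
              = hamiltonian m q (\<lambda>y. A y + grad G y) N x p)
        \<longleftrightarrow> (\<lambda>y. - (Mm *v A (Mm *v y))) = (\<lambda>y. A y + grad G y)" for G
    using hamiltonian_eq_iff_potential_eq assms(1-3)
    by (simp add: hamiltonian_Mact[OF assms(5)] transpose_Mm)
  have "(\<lambda>y. - (Mm *v A (Mm *v y))) = (\<lambda>y. A y + grad G y)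
        \<longleftrightarrow> (\<forall>x. Mm *v A (Mm *v x) = - A x - grad G x)" for G
    by (auto simp: fun_eq_iff minus_equation_iff[of "Mm *v _"])
  with time_reversal_iff show ?thesis
    by (simp add: yields_TRI_def hamiltonian_def)
qed

end
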